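(* For every integer $k\ge2$ and $\varepsilon>0$ there is $\delta=\delta(\varepsilon,k,\Omega)>0$ such that for all sufficiently large $n$ the following holds. Let $\mu\in\mathcal P(\Omega^n)$ be $\delta$-regular with respect to a partition $\vec V=(V_1,\dots,V_m)$ of $[n]$ and set $\bar\mu_i=\langle\boldsymbol\sigma[\cdot|V_i]\rangle_\mu\in\mathcal P(\Omega)$ for $i\in[m]$. If $\sum_{i\in[m]}\frac{|V_i|}{n}\langle\|\boldsymbol\sigma[\cdot|V_i]-\bar\mu_i\|_{TV}\rangle_\mu<\delta$, then $\mu$ is $(\varepsilon,k)$-symmetric.
   Context: $\Omega$ is a fixed finite nonempty set, $\mathcal P(\mathcal X)$ the set of probability measures on a finite set $\mathcal X$, $\|\cdot\|_{TV}$ total variation. For $\sigma\in\Omega^n$, nonempty $S\subset[n]$ and $\omega\in\Omega$, $\sigma[\omega|S]=|\sigma^{-1}(\omega)\cap S|/|S|$; $\langle X(\boldsymbol\sigma)\rangle_\mu=\sum_\sigma\mu(\sigma)X(\sigma)$ (applied coordinatewise to vector-valued $X$). $\mu$ is $\delta$-regular on $U\subset[n]$ if for every $S\subset U$ with $|S|\ge\delta|U|$, $\langle\|\boldsymbol\sigma[\cdot|S]-\boldsymbol\sigma[\cdot|U]\|_{TV}\rangle_\mu<\delta$; $\mu$ is $\delta$-regular with respect to $\vec V$ if there is $J\subset[m]$ with $\sum_{i\notin J}|V_i|<\delta n$ such that $\mu$ is $\delta$-regular on $V_i$ for all $i\in J$. For $x_1,\dots,x_k\in[n]$ let $\mu_{\downarrow\{x_1,\dots,x_k\}}$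 be the joint law of $(\boldsymbol\sigma(x_1),\dots,\boldsymbol\sigma(x_k))$ and $\mu_{\downarrow x}$ the law of $\boldsymbol\sigma(x)$, $\boldsymbol\sigma\sim\mu$. $\mu$ is $(\varepsilon,k)$-symmetric if $\frac1{n^k}\sum_{x_1,\dots,x_k\in[n]}\|\mu_{\downarrow\{x_1,\dots,x_k\}}-\mu_{\downarrow x_1}\otimes\cdots\otimes\mu_{\downarrow x_k}\|_{TV}<\varepsilon$. *)

theory Defs
  imports Complex_Main "HOL-Library.FuncSet"
begin

text \<open>Omega is a finite (nonempty) type 'o. Configurations sigma in Omega^n are
  extensional functions on [n] = {1..n}.\<close>

definition cfg :: "nat \<Rightarrow> (nat \<Rightarrow> 'o) set" where
  "cfg n = {1..n} \<rightarrow>\<^sub>E (UNIV :: 'o set)"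

definition is_prob :: "nat \<Rightarrow> ((nat \<Rightarrow> 'o) \<Rightarrow> real) \<Rightarrow> bool" where
  "is_prob n \<mu> \<longleftrightarrow> (\<forall>\<sigma>\<in>cfg n. \<mu> \<sigma> \<ge> 0) \<and> (\<Sum>\<sigma>\<in>cfg n. \<mu> \<sigma>) = 1"

definition expect :: "nat \<Rightarrow> ((nat \<Rightarrow> 'o) \<Rightarrow> real) \<Rightarrow> ((nat \<Rightarrow> 'o) \<Rightarrow> real) \<Rightarrow> real" where
  "expect n \<mu> X = (\<Sum>\<sigma>\<in>cfg n. \<mu> \<sigma> * X \<sigma>)"

definition frac :: "(nat \<Rightarrow> 'o) \<Rightarrow> nat set \<Rightarrow> 'o \<Rightarrow> real" where
  "frac \<sigma> S \<omega> = real (card {x\<in>S. \<sigma> x = \<omega>}) / real (card S)"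

definition tv :: "'a set \<Rightarrow> ('a \<Rightarrow> real) \<Rightarrow> ('a \<Rightarrow> real) \<Rightarrow> real" where
  "tv A p q = (1/2) * (\<Sum>a\<in>A. \<bar>p a - q a\<bar>)"

definition regular_on :: "nat \<Rightarrow> real \<Rightarrow> ((nat \<Rightarrow> 'o) \<Rightarrow> real) \<Rightarrow> nat set \<Rightarrow> bool" where
  "regular_on n \<delta> \<mu> U \<longleftrightarrow>
     (\<forall>S. S \<subseteq> U \<and> real (card S) \<ge> \<delta> * real (card U) \<longrightarrow>
        expect n \<mu> (\<lambda>\<sigma>. tv (UNIV :: 'o set) (frac \<sigma> S) (frac \<sigma> U)) < \<delta>)"

definition regular_wrt :: "nat \<Rightarrow> real \<Rightarrow> ((nat \<Rightarrow> 'o) \<Rightarrow> real) \<Rightarrow> nat \<Rightarrow> (nat \<Rightarrow> nat set) \<Rightarrow> bool" where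
  "regular_wrt n \<delta> \<mu> m V \<longleftrightarrow>
     (\<exists>J \<subseteq> {1..m}. real (\<Sum>i\<in>{1..m} - J. card (V i)) < \<delta> * real n \<and>
        (\<forall>i\<in>J. regular_on n \<delta> \<mu> (V i)))"

definition is_partition :: "nat \<Rightarrow> nat \<Rightarrow> (nat \<Rightarrow> nat set) \<Rightarrow> bool" where
  "is_partition n m V \<longleftrightarrow>
     (\<forall>i\<in>{1..m}. V i \<noteq> {}) \<and>
     (\<forall>i\<in>{1..m}. \<forall>j\<in>{1..m}. i \<noteq> j \<longrightarrow> V i \<inter> V j = {}) \<and>
     (\<Union>i\<in>{1..m}. V i) = {1..n}"

definition joint :: "nat \<Rightarrow> ((nat \<Rightarrow> 'o) \<Rightarrow> real) \<Rightarrow> nat list \<Rightarrow> 'o list \<Rightarrow> real" where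
  "joint n \<mu> xs ws = (\<Sum>\<sigma>\<in>{\<sigma>\<in>cfg n. map \<sigma> xs = ws}. \<mu> \<sigma>)"

definition marg :: "nat \<Rightarrow> ((nat \<Rightarrow> 'o) \<Rightarrow> real) \<Rightarrow> nat \<Rightarrow> 'o \<Rightarrow> real" where
  "marg n \<mu> x w = (\<Sum>\<sigma>\<in>{\<sigma>\<in>cfg n. \<sigma> x = w}. \<mu> \<sigma>)"

definition prod_marg :: "nat \<Rightarrow> ((nat \<Rightarrow> 'o) \<Rightarrow> real) \<Rightarrow> nat list \<Rightarrow> 'o list \<Rightarrow> real" where
  "prod_marg n \<mu> xs ws = (\<Prod>j<length xs. marg n \<mu> (xs ! j) (ws ! j))"

definition symmetric :: "nat \<Rightarrow> real \<Rightarrow> nat \<Rightarrow> ((nat \<Rightarrow> 'o) \<Rightarrow> real) \<Rightarrow> bool" where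
  "symmetric n \<epsilon> k \<mu> \<longleftrightarrow>
     (1 / real n ^ k) * (\<Sum>xs\<in>{xs. set xs \<subseteq> {1..n} \<and> length xs = k}.
        tv {ws :: 'o list. length ws = k} (joint n \<mu> xs) (prod_marg n \<mu> xs)) < \<epsilon>"

end

theory Submission
  imports Defs "HOL-Library.Cardinality"
begin

text \<open>
  Fix an event \<open>E\<close> about the spins of \<open>x\<^sub>2, \<dots>, x\<^sub>k\<close>. For a large subset \<open>S\<close> of a
  regular part \<open>V\<close>, regularity lets \<open>\<sigma>[\<cdot>|S]\<close> be replaced by \<open>\<sigma>[\<cdot>|V]\<close>, and the small
  dispersion of \<open>\<sigma>[\<cdot>|V]\<close> lets it be replaced by its mean \<open>\<mu>\<^sub>V\<close>; hence
  \<open>\<Sum>\<^sub>x\<^sub>\<in>\<^sub>S \<mu>(E, \<sigma>(x) = w) \<approx> |S| \<mu>\<^sub>V(w) \<mu>(E)\<close>. Since this holds for every large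
  \<open>S\<close> (and trivially for small ones), splitting into the \<open>x\<close> with positive and negative
  deviation gives \<open>\<Sum>\<^sub>x |\<mu>(E, \<sigma>(x) = w) - \<mu>(\<sigma>(x) = w) \<mu>(E)| = O(\<delta>n)\<close>; irregular parts
  cover fewer than \<open>\<delta>n\<close> vertices. Applying this to \<open>E = {\<sigma>(x\<^sub>2..x\<^sub>k) = ws}\<close> and peeling
  off one coordinate at a time bounds the total variation between the joint law of
  \<open>k\<close> spins and the product of their marginals by \<open>O(k\<delta>)\<close> on average.
\<close>

lemma finite_cfg: "finite (cfg n :: (nat \<Rightarrow> 'o::finite) set)"
  unfolding cfg_def by (intro finite_PiE) auto

lemma frac_eq_sum_indicator:
  "finite S \<Longrightarrow> frac \<sigma> S w = (\<Sum>x\<in>S. if \<sigma> x = w then 1 else 0) / real (card S)"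
  unfolding frac_def by (simp add: sum.inter_filter[symmetric])

lemma frac_bounds: "finite S \<Longrightarrow> 0 \<le> frac \<sigma> S w \<and> frac \<sigma> S w \<le> 1"
  unfolding frac_def by (cases "card S = 0") (auto simp: divide_le_eq_1 card_mono)

lemma sum_indicator_eq_card_mult_frac:
  "finite S \<Longrightarrow> (\<Sum>x\<in>S. if \<sigma> x = w then 1 else 0) = real (card S) * frac \<sigma> S w"
  by (cases "S = {}") (auto simp: frac_eq_sum_indicator)

lemma sum_frac_eq_1:
  assumes "finite S" "S \<noteq> {}"
  shows "(\<Sum>w\<in>UNIV. frac \<sigma> S (w::'o::finite)) = 1"
proof -
  have "(\<Sum>w\<in>(UNIV::'o set). \<Sum>x\<in>S. if \<sigma> x = w then 1 else 0) = (\<Sum>x\<in>S. 1::real)"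
    by (subst sum.swap) (simp add: sum.delta)
  then show ?thesis
    using assms by (simp add: frac_eq_sum_indicator sum_divide_distrib[symmetric])
qed

lemma tv_nonneg: "0 \<le> tv A p q"
  unfolding tv_def by (simp add: sum_nonneg)

lemma abs_le_twice_tv: "finite A \<Longrightarrow> a \<in> A \<Longrightarrow> \<bar>p a - q a\<bar> \<le> 2 * tv A p q"
  unfolding tv_def using member_le_sum[of a A "\<lambda>a. \<bar>p a - q a\<bar>"] by simp

lemma sum_abs_le_twice_subsum_bound:
  fixes f :: "'a \<Rightarrow> real"
  assumes "finite V" and "\<And>S. S \<subseteq> V \<Longrightarrow> \<bar>\<Sum>x\<in>S. f x\<bar> \<le> c"
  shows "(\<Sum>x\<in>V. \<bar>f x\<bar>) \<le> 2 * c"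
proof -
  let ?P = "{x\<in>V. 0 \<le> f x}" and ?N = "{x\<in>V. f x < 0}"
  have "(\<Sum>x\<in>V. \<bar>f x\<bar>) = (\<Sum>x\<in>?P. f x) - (\<Sum>x\<in>?N. f x)"
    using assms(1) by (simp add: sum.inter_filter sum_subtractf[symmetric] abs_if, intro sum.cong) auto
  moreover have "(\<Sum>x\<in>?P. f x) \<le> c" "- (\<Sum>x\<in>?N. f x) \<le> c"
    using assms(2)[of ?P] assms(2)[of ?N] by auto
  ultimately show ?thesis by linarith
qed

lemma partition_finite:
  assumes "is_partition n m V" "i \<in> {1..m}"
  shows "finite (V i)"
proof (rule finite_subset)
  show "V i \<subseteq> {1..n}"
    using assms unfolding is_partition_def by blast
qed simp

lemma sum_over_partition:
  assumes part: "is_partition n m V"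
  shows "(\<Sum>x\<in>{1..n}. f x) = (\<Sum>i\<in>{1..m}. \<Sum>x\<in>V i. f x)"
proof -
  have "(\<Sum>x\<in>(\<Union>i\<in>{1..m}. V i). f x) = (\<Sum>i\<in>{1..m}. \<Sum>x\<in>V i. f x)"
    using part partition_finite[OF part] unfolding is_partition_def
    by (intro sum.UNION_disjoint) auto
  then show ?thesis
    using part unfolding is_partition_def by simp
qed

lemma sum_card_partition: "is_partition n m V \<Longrightarrow> (\<Sum>i\<in>{1..m}. card (V i)) = n"
  using sum_over_partition[of n m V "\<lambda>_. 1::nat"] by simp

lemma sum_over_mostly_regular_partition_le:
  fixes P t :: "nat \<Rightarrow> real"
  assumes part: "is_partition n m V" and J: "J \<subseteq> {1..m}"
    and irregular: "real (\<Sum>i\<in>{1..m} - J. card (V i)) < \<delta> * real n"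
    and dispersion: "(\<Sum>i\<in>{1..m}. real (card (V i)) / real n * t i) < \<delta>" "\<And>i. 0 \<le> t i"
    and n: "n > 0" and c: "0 \<le> c"
    and regular_part: "\<And>i. i \<in> J \<Longrightarrow> P i \<le> c * real (card (V i)) * (\<delta> + t i)"
    and any_part: "\<And>i. i \<in> {1..m} \<Longrightarrow> P i \<le> 2 * real (card (V i))"
  shows "(\<Sum>i\<in>{1..m}. P i) \<le> (2 * c + 2) * \<delta> * real n"
proof -
  have "0 \<le> (\<Sum>i\<in>{1..m}. real (card (V i)) / real n * t i)"
    using dispersion(2) by (intro sum_nonneg) simp
  with dispersion(1) have "0 \<le> \<delta>" by linarith
  have "(\<Sum>i\<in>J. real (card (V i))) \<le> (\<Sum>i\<in>{1..m}. real (card (V i)))"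
    using J by (intro sum_mono2) auto
  also have "\<dots> = real n"
    using sum_card_partition[OF part] by (metis of_nat_sum)
  finally have size_J: "(\<Sum>i\<in>J. real (card (V i))) \<le> real n" .
  have "(\<Sum>i\<in>J. real (card (V i)) * t i) \<le> (\<Sum>i\<in>{1..m}. real (card (V i)) * t i)"
    using J dispersion(2) by (intro sum_mono2) auto
  also have "\<dots> = real n * (\<Sum>i\<in>{1..m}. real (card (V i)) / real n * t i)"
    using n by (simp add: sum_distrib_left)
  also have "\<dots> \<le> real n * \<delta>"
    using dispersion(1) by (intro mult_left_mono) auto
  finally have dispersion_J: "(\<Sum>i\<in>J. real (card (V i)) * t i) \<le> \<delta> * real n"
    by (simp add: mult.commute)
  have "(\<Sum>i\<in>J. P i) \<le> (\<Sum>i\<in>J. c * real (card (V i)) * (\<delta> + t i))"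
    using regular_part by (rule sum_mono)
  also have "\<dots> = c * (\<delta> * (\<Sum>i\<in>J. real (card (V i))) + (\<Sum>i\<in>J. real (card (V i)) * t i))"
    by (simp add: sum_distrib_left sum.distrib algebra_simps)
  also have "\<dots> \<le> c * (2 * \<delta> * real n)"
    using mult_left_mono[OF size_J \<open>0 \<le> \<delta>\<close>] dispersion_J c by (intro mult_left_mono) linarith+
  finally have regular_sum: "(\<Sum>i\<in>J. P i) \<le> c * (2 * \<delta> * real n)" .
  have "(\<Sum>i\<in>{1..m} - J. P i) \<le> (\<Sum>i\<in>{1..m} - J. 2 * real (card (V i)))"
    using any_part by (intro sum_mono) auto
  also have "\<dots> \<le> 2 * \<delta> * real n"
    using irregular by (simp add: sum_distrib_left[symmetric])
  finally have irregular_sum: "(\<Sum>i\<in>{1..m} - J. P i) \<le> 2 * \<delta> * real n" .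
  have "(\<Sum>i\<in>{1..m}. P i) = (\<Sum>i\<in>J. P i) + (\<Sum>i\<in>{1..m} - J. P i)"
    using sum.subset_diff[OF J finite_atLeastAtMost, of P] by simp
  with regular_sum irregular_sum show ?thesis
    by (simp add: algebra_simps)
qed

lemma sum_lists_Suc:
  "(\<Sum>v\<in>{xs. set xs \<subseteq> A \<and> length xs = Suc j}. F v)
    = (\<Sum>xs\<in>{xs. set xs \<subseteq> A \<and> length xs = j}. \<Sum>x\<in>A. F (x # xs))"
proof -
  have inj: "inj_on (\<lambda>(xs, x). x # xs) ({xs. set xs \<subseteq> A \<and> length xs = j} \<times> A)"
    by (auto simp: inj_on_def)
  show ?thesis
    unfolding lists_length_Suc_eq sum.reindex[OF inj] sum.cartesian_product by (auto intro!: sum.cong)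
qed

lemma prod_marg_Cons: "prod_marg n \<mu> (x # xs) (w # ws) = marg n \<mu> x w * prod_marg n \<mu> xs ws"
  unfolding prod_marg_def by (simp del: prod.lessThan_Suc add: prod.lessThan_Suc_shift)

text \<open>
  For \<open>g\<close> the indicator of an event \<open>E\<close>, \<open>wmarg n \<mu> g x w = \<mu>(E, \<sigma>(x) = w)\<close>, so
  \<open>decoupling_error n \<mu> g\<close> measures how far \<open>E\<close> is from being independent of the
  individual spins.
\<close>

definition wmarg :: "nat \<Rightarrow> ((nat \<Rightarrow> 'o) \<Rightarrow> real) \<Rightarrow> ((nat \<Rightarrow> 'o) \<Rightarrow> real) \<Rightarrow> nat \<Rightarrow> 'o \<Rightarrow> real" where
  "wmarg n \<mu> g x w = expect n \<mu> (\<lambda>\<sigma>. g \<sigma> * (if \<sigma> x = w then 1 else 0))"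

definition mean_frac :: "nat \<Rightarrow> ((nat \<Rightarrow> 'o) \<Rightarrow> real) \<Rightarrow> nat set \<Rightarrow> 'o \<Rightarrow> real" where
  "mean_frac n \<mu> V w = expect n \<mu> (\<lambda>\<tau>. frac \<tau> V w)"

definition frac_dispersion :: "nat \<Rightarrow> ((nat \<Rightarrow> 'o::finite) \<Rightarrow> real) \<Rightarrow> nat set \<Rightarrow> real" where
  "frac_dispersion n \<mu> V = expect n \<mu> (\<lambda>\<sigma>. tv UNIV (frac \<sigma> V) (mean_frac n \<mu> V))"

definition decoupling_error :: "nat \<Rightarrow> ((nat \<Rightarrow> 'o::finite) \<Rightarrow> real) \<Rightarrow> ((nat \<Rightarrow> 'o) \<Rightarrow> real) \<Rightarrow> real" where
  "decoupling_error n \<mu> g =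
     (\<Sum>x\<in>{1..n}. \<Sum>w\<in>UNIV. \<bar>wmarg n \<mu> g x w - marg n \<mu> x w * expect n \<mu> g\<bar>)"

context
  fixes n :: nat and \<mu> :: "(nat \<Rightarrow> 'o::finite) \<Rightarrow> real"
  assumes prob: "is_prob n \<mu>"
begin

lemma expect_mono: "(\<And>\<sigma>. \<sigma> \<in> cfg n \<Longrightarrow> X \<sigma> \<le> Y \<sigma>) \<Longrightarrow> expect n \<mu> X \<le> expect n \<mu> Y"
  using prob unfolding expect_def is_prob_def by (intro sum_mono mult_left_mono) auto

lemma expect_const [simp]: "expect n \<mu> (\<lambda>_. c) = c"
  using prob unfolding expect_def is_prob_def by (simp add: sum_distrib_right[symmetric])

lemma expect_add: "expect n \<mu> (\<lambda>\<sigma>. X \<sigma> + Y \<sigma>) = expect n \<mu> X + expect n \<mu> Y"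
  unfolding expect_def by (simp add: distrib_left sum.distrib)

lemma expect_diff: "expect n \<mu> (\<lambda>\<sigma>. X \<sigma> - Y \<sigma>) = expect n \<mu> X - expect n \<mu> Y"
  unfolding expect_def by (simp add: right_diff_distrib sum_subtractf)

lemma expect_cmult: "expect n \<mu> (\<lambda>\<sigma>. c * X \<sigma>) = c * expect n \<mu> X"
  unfolding expect_def by (simp add: sum_distrib_left mult_ac)

lemma expect_mult_const: "expect n \<mu> (\<lambda>\<sigma>. X \<sigma> * c) = expect n \<mu> X * c"
  unfolding expect_def by (simp add: sum_distrib_right mult.assoc)

lemma expect_sum: "expect n \<mu> (\<lambda>\<sigma>. \<Sum>x\<in>S. X x \<sigma>) = (\<Sum>x\<in>S. expect n \<mu> (X x))"
  unfolding expect_def by (simp add: sum_distrib_left sum.swap[of _ S])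

lemma abs_expect_le: "\<bar>expect n \<mu> X\<bar> \<le> expect n \<mu> (\<lambda>\<sigma>. \<bar>X \<sigma>\<bar>)"
  using prob unfolding expect_def is_prob_def
  by (intro order_trans[OF sum_abs] sum_mono) (auto simp: abs_mult)

lemma expect_bounds:
  "(\<And>\<sigma>. \<sigma> \<in> cfg n \<Longrightarrow> 0 \<le> X \<sigma> \<and> X \<sigma> \<le> 1) \<Longrightarrow> 0 \<le> expect n \<mu> X \<and> expect n \<mu> X \<le> 1"
  using expect_mono[of "\<lambda>_. 0" X] expect_mono[of X "\<lambda>_. 1"] by auto

lemma wmarg_bounds:
  "(\<And>\<sigma>. \<sigma> \<in> cfg n \<Longrightarrow> 0 \<le> g \<sigma> \<and> g \<sigma> \<le> 1) \<Longrightarrow> 0 \<le> wmarg n \<mu> g x w \<and> wmarg n \<mu> g x w \<le> 1"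
  unfolding wmarg_def by (rule expect_bounds) auto

lemma mean_frac_bounds: "finite V \<Longrightarrow> 0 \<le> mean_frac n \<mu> V w \<and> mean_frac n \<mu> V w \<le> 1"
  unfolding mean_frac_def by (intro expect_bounds frac_bounds)

lemma frac_dispersion_nonneg: "0 \<le> frac_dispersion n \<mu> V"
  unfolding frac_dispersion_def using expect_mono[of "\<lambda>_. 0"] by (simp add: tv_nonneg)

lemma sum_mean_frac_eq_1: "finite V \<Longrightarrow> V \<noteq> {} \<Longrightarrow> (\<Sum>w\<in>UNIV. mean_frac n \<mu> V w) = 1"
  unfolding mean_frac_def by (simp add: expect_sum[symmetric] sum_frac_eq_1)

lemma sum_wmarg: "(\<Sum>w\<in>UNIV. wmarg n \<mu> g x w) = expect n \<mu> g"
  unfolding wmarg_def by (simp add: expect_sum[symmetric] sum_distrib_left[symmetric] sum.delta)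

lemma sum_wmarg_over:
  "finite S \<Longrightarrow> (\<Sum>x\<in>S. wmarg n \<mu> g x w) = real (card S) * expect n \<mu> (\<lambda>\<sigma>. g \<sigma> * frac \<sigma> S w)"
  unfolding wmarg_def
  by (simp add: expect_sum[symmetric] sum_distrib_left[symmetric] sum_indicator_eq_card_mult_frac
      expect_cmult[symmetric] mult_ac)

lemma marg_eq_wmarg_1: "marg n \<mu> x w = wmarg n \<mu> (\<lambda>_. 1) x w"
  unfolding marg_def wmarg_def expect_def
  by (simp add: sum.inter_filter[OF finite_cfg], intro sum.cong) auto

lemma abs_expect_weighted_frac_dev_le:
  assumes g: "\<And>\<sigma>. \<sigma> \<in> cfg n \<Longrightarrow> 0 \<le> g \<sigma> \<and> g \<sigma> \<le> 1"
  shows "\<bar>expect n \<mu> (\<lambda>\<sigma>. g \<sigma> * (frac \<sigma> S w - mean_frac n \<mu> V w))\<bar>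
    \<le> 2 * expect n \<mu> (\<lambda>\<sigma>. tv UNIV (frac \<sigma> S) (frac \<sigma> V)) + 2 * frac_dispersion n \<mu> V"
proof -
  have "\<bar>g \<sigma> * (frac \<sigma> S w - mean_frac n \<mu> V w)\<bar>
      \<le> 2 * tv UNIV (frac \<sigma> S) (frac \<sigma> V) + 2 * tv UNIV (frac \<sigma> V) (mean_frac n \<mu> V)"
    if "\<sigma> \<in> cfg n" for \<sigma>
  proof -
    have "\<bar>g \<sigma> * (frac \<sigma> S w - mean_frac n \<mu> V w)\<bar> \<le> \<bar>frac \<sigma> S w - mean_frac n \<mu> V w\<bar>"
      using g[OF that] by (simp add: abs_mult mult_left_le_one_le)
    also have "\<dots> \<le> \<bar>frac \<sigma> S w - frac \<sigma> V w\<bar> + \<bar>frac \<sigma> V w - mean_frac n \<mu> V w\<bar>"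
      by linarith
    also have "\<dots> \<le> 2 * tv UNIV (frac \<sigma> S) (frac \<sigma> V) + 2 * tv UNIV (frac \<sigma> V) (mean_frac n \<mu> V)"
      by (intro add_mono abs_le_twice_tv) auto
    finally show ?thesis .
  qed
  then have "\<bar>expect n \<mu> (\<lambda>\<sigma>. g \<sigma> * (frac \<sigma> S w - mean_frac n \<mu> V w))\<bar>
      \<le> expect n \<mu> (\<lambda>\<sigma>. 2 * tv UNIV (frac \<sigma> S) (frac \<sigma> V) + 2 * tv UNIV (frac \<sigma> V) (mean_frac n \<mu> V))"
    by (intro order_trans[OF abs_expect_le expect_mono])
  then show ?thesis
    by (simp only: frac_dispersion_def expect_add expect_cmult)
qed

lemma abs_sum_wmarg_dev_le:
  assumes g: "\<And>\<sigma>. \<sigma> \<in> cfg n \<Longrightarrow> 0 \<le> g \<sigma> \<and> g \<sigma> \<le> 1"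
    and reg: "regular_on n \<delta> \<mu> V" and V: "finite V" and S: "S \<subseteq> V" and \<delta>: "\<delta> > 0"
  shows "\<bar>\<Sum>x\<in>S. wmarg n \<mu> g x w - mean_frac n \<mu> V w * expect n \<mu> g\<bar>
    \<le> real (card V) * (2 * \<delta> + 2 * frac_dispersion n \<mu> V)"
proof (cases "real (card S) \<ge> \<delta> * real (card V)")
  case True
  let ?D = "2 * \<delta> + 2 * frac_dispersion n \<mu> V"
  have "finite S" using V S finite_subset by blast
  have "(\<Sum>x\<in>S. wmarg n \<mu> g x w - mean_frac n \<mu> V w * expect n \<mu> g)
      = real (card S) * (expect n \<mu> (\<lambda>\<sigma>. g \<sigma> * frac \<sigma> S w) - expect n \<mu> g * mean_frac n \<mu> V w)"
    using \<open>finite S\<close> by (simp add: sum_subtractf sum_wmarg_over right_diff_distrib mult_ac)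
  also have "\<dots> = real (card S) * expect n \<mu> (\<lambda>\<sigma>. g \<sigma> * (frac \<sigma> S w - mean_frac n \<mu> V w))"
    by (simp add: right_diff_distrib expect_diff expect_mult_const)
  finally have sum_eq: "(\<Sum>x\<in>S. wmarg n \<mu> g x w - mean_frac n \<mu> V w * expect n \<mu> g)
      = real (card S) * expect n \<mu> (\<lambda>\<sigma>. g \<sigma> * (frac \<sigma> S w - mean_frac n \<mu> V w))" .
  have "expect n \<mu> (\<lambda>\<sigma>. tv UNIV (frac \<sigma> S) (frac \<sigma> V)) < \<delta>"
    using reg True S unfolding regular_on_def by auto
  then have "\<bar>expect n \<mu> (\<lambda>\<sigma>. g \<sigma> * (frac \<sigma> S w - mean_frac n \<mu> V w))\<bar> \<le> ?D"
    using abs_expect_weighted_frac_dev_le[of g S w V, OF g] by linarith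
  moreover have "real (card S) \<le> real (card V)"
    using card_mono[OF V S] by simp
  moreover have "0 \<le> ?D"
    using \<delta> frac_dispersion_nonneg[of V] by simp
  ultimately show ?thesis
    unfolding sum_eq abs_mult by (simp add: mult_mono)
next
  case False
  have "0 \<le> mean_frac n \<mu> V w * expect n \<mu> g" "mean_frac n \<mu> V w * expect n \<mu> g \<le> 1"
    using mean_frac_bounds[of V w, OF V] expect_bounds[of g, OF g] by (simp_all add: mult_le_one)
  then have "\<bar>wmarg n \<mu> g x w - mean_frac n \<mu> V w * expect n \<mu> g\<bar> \<le> 1" for x
    using wmarg_bounds[of g x w, OF g] unfolding abs_le_iff by linarith
  then have "\<bar>\<Sum>x\<in>S. wmarg n \<mu> g x w - mean_frac n \<mu> V w * expect n \<mu> g\<bar> \<le> (\<Sum>x\<in>S. 1)"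
    by (intro order_trans[OF sum_abs] sum_mono)
  also have "\<dots> = real (card S)"
    by simp
  also have "\<dots> \<le> real (card V) * \<delta>"
    using False by (simp add: mult.commute)
  also have "\<dots> \<le> real (card V) * (2 * \<delta> + 2 * frac_dispersion n \<mu> V)"
    using \<delta> frac_dispersion_nonneg[of V] by (intro mult_left_mono) auto
  finally show ?thesis .
qed

lemma sum_abs_wmarg_dev_le_regular:
  assumes g: "\<And>\<sigma>. \<sigma> \<in> cfg n \<Longrightarrow> 0 \<le> g \<sigma> \<and> g \<sigma> \<le> 1"
    and reg: "regular_on n \<delta> \<mu> V" and V: "finite V" and \<delta>: "\<delta> > 0"
  shows "(\<Sum>x\<in>V. \<Sum>w\<in>UNIV. \<bar>wmarg n \<mu> g x w - mean_frac n \<mu> V w * expect n \<mu> g\<bar>)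
    \<le> 4 * real CARD('o) * real (card V) * (\<delta> + frac_dispersion n \<mu> V)"
proof -
  have "(\<Sum>x\<in>V. \<Sum>w\<in>UNIV. \<bar>wmarg n \<mu> g x w - mean_frac n \<mu> V w * expect n \<mu> g\<bar>)
      = (\<Sum>w\<in>UNIV. \<Sum>x\<in>V. \<bar>wmarg n \<mu> g x w - mean_frac n \<mu> V w * expect n \<mu> g\<bar>)"
    by (rule sum.swap)
  also have "\<dots> \<le> (\<Sum>w\<in>(UNIV::'o set). 2 * (real (card V) * (2 * \<delta> + 2 * frac_dispersion n \<mu> V)))"
    by (intro sum_mono sum_abs_le_twice_subsum_bound V abs_sum_wmarg_dev_le[OF g reg V _ \<delta>])
  finally show ?thesis by (simp add: algebra_simps)
qed

lemma sum_abs_wmarg_dev_le_twice_card: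
  assumes g: "\<And>\<sigma>. \<sigma> \<in> cfg n \<Longrightarrow> 0 \<le> g \<sigma> \<and> g \<sigma> \<le> 1"
    and V: "finite V" "V \<noteq> {}"
  shows "(\<Sum>x\<in>V. \<Sum>w\<in>UNIV. \<bar>wmarg n \<mu> g x w - mean_frac n \<mu> V w * expect n \<mu> g\<bar>) \<le> 2 * real (card V)"
proof -
  have "(\<Sum>w\<in>UNIV. \<bar>wmarg n \<mu> g x w - mean_frac n \<mu> V w * expect n \<mu> g\<bar>) \<le> 2" for x
  proof -
    have "(\<Sum>w\<in>UNIV. \<bar>wmarg n \<mu> g x w - mean_frac n \<mu> V w * expect n \<mu> g\<bar>)
        \<le> (\<Sum>w\<in>UNIV. wmarg n \<mu> g x w + mean_frac n \<mu> V w * expect n \<mu> g)"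
      using wmarg_bounds[of g, OF g] mean_frac_bounds[OF V(1)] expect_bounds[of g, OF g]
      by (intro sum_mono) (simp add: abs_le_iff)
    also have "\<dots> = 2 * expect n \<mu> g"
      by (simp add: sum.distrib sum_wmarg sum_distrib_right[symmetric]
          sum_mean_frac_eq_1[OF V])
    finally show ?thesis using expect_bounds[of g, OF g] by simp
  qed
  then have "(\<Sum>x\<in>V. \<Sum>w\<in>UNIV. \<bar>wmarg n \<mu> g x w - mean_frac n \<mu> V w * expect n \<mu> g\<bar>) \<le> (\<Sum>x\<in>V. 2)"
    by (intro sum_mono)
  then show ?thesis by simp
qed

lemma abs_wmarg_marg_dev_le:
  assumes g: "\<And>\<sigma>. \<sigma> \<in> cfg n \<Longrightarrow> 0 \<le> g \<sigma> \<and> g \<sigma> \<le> 1"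
  shows "\<bar>wmarg n \<mu> g x w - marg n \<mu> x w * expect n \<mu> g\<bar>
    \<le> \<bar>wmarg n \<mu> g x w - p * expect n \<mu> g\<bar> + \<bar>wmarg n \<mu> (\<lambda>_. 1) x w - p * expect n \<mu> (\<lambda>_. 1)\<bar>"
proof -
  have Eg: "0 \<le> expect n \<mu> g" "expect n \<mu> g \<le> 1"
    using expect_bounds[of g, OF g] by auto
  have "wmarg n \<mu> g x w - marg n \<mu> x w * expect n \<mu> g
      = (wmarg n \<mu> g x w - p * expect n \<mu> g) - expect n \<mu> g * (marg n \<mu> x w - p)"
    by (simp add: algebra_simps)
  moreover have "\<bar>expect n \<mu> g * (marg n \<mu> x w - p)\<bar> \<le> \<bar>marg n \<mu> x w - p\<bar>"
    using Eg by (simp add: abs_mult mult_left_le_one_le)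
  ultimately show ?thesis
    by (simp add: marg_eq_wmarg_1[symmetric])
qed

lemma decoupling_error_le:
  assumes g: "\<And>\<sigma>. \<sigma> \<in> cfg n \<Longrightarrow> 0 \<le> g \<sigma> \<and> g \<sigma> \<le> 1"
    and part: "is_partition n m V" and reg: "regular_wrt n \<delta> \<mu> m V"
    and dispersion: "(\<Sum>i\<in>{1..m}. real (card (V i)) / real n * frac_dispersion n \<mu> (V i)) < \<delta>"
    and n: "n > 0" and \<delta>: "\<delta> > 0"
  shows "decoupling_error n \<mu> g \<le> 2 * (8 * real CARD('o) + 2) * \<delta> * real n"
proof -
  obtain J where J: "J \<subseteq> {1..m}"
    and irregular: "real (\<Sum>i\<in>{1..m} - J. card (V i)) < \<delta> * real n"
    and regular: "\<And>i. i \<in> J \<Longrightarrow> regular_on n \<delta> \<mu> (V i)"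
    using reg unfolding regular_wrt_def by blast
  define dev where "dev h i =
    (\<Sum>x\<in>V i. \<Sum>w\<in>UNIV. \<bar>wmarg n \<mu> h x w - mean_frac n \<mu> (V i) w * expect n \<mu> h\<bar>)" for h i
  have dev_sum: "(\<Sum>i\<in>{1..m}. dev h i) \<le> (8 * real CARD('o) + 2) * \<delta> * real n"
    if h: "\<And>\<sigma>. \<sigma> \<in> cfg n \<Longrightarrow> 0 \<le> h \<sigma> \<and> h \<sigma> \<le> 1" for h
  proof -
    have "dev h i \<le> 4 * real CARD('o) * real (card (V i)) * (\<delta> + frac_dispersion n \<mu> (V i))"
      if "i \<in> J" for i
      unfolding dev_def using that J \<delta>
      by (intro sum_abs_wmarg_dev_le_regular[OF h] regular partition_finite[OF part]) auto
    moreover have "dev h i \<le> 2 * real (card (V i))" if "i \<in> {1..m}" for i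
    proof -
      have "V i \<noteq> {}" using part that unfolding is_partition_def by auto
      then show ?thesis
        unfolding dev_def by (intro sum_abs_wmarg_dev_le_twice_card[OF h] partition_finite[OF part that])
    qed
    ultimately have "(\<Sum>i\<in>{1..m}. dev h i) \<le> (2 * (4 * real CARD('o)) + 2) * \<delta> * real n"
      by (intro sum_over_mostly_regular_partition_le[OF part J irregular dispersion
            frac_dispersion_nonneg n]) auto
    then show ?thesis by simp
  qed
  have "decoupling_error n \<mu> g
      = (\<Sum>i\<in>{1..m}. \<Sum>x\<in>V i. \<Sum>w\<in>UNIV. \<bar>wmarg n \<mu> g x w - marg n \<mu> x w * expect n \<mu> g\<bar>)"
    unfolding decoupling_error_def by (rule sum_over_partition[OF part])
  also have "\<dots> \<le> (\<Sum>i\<in>{1..m}. dev g i + dev (\<lambda>_. 1) i)"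
    unfolding dev_def sum.distrib[symmetric]
    by (intro sum_mono abs_wmarg_marg_dev_le g)
  also have "\<dots> \<le> 2 * (8 * real CARD('o) + 2) * \<delta> * real n"
    using dev_sum[of g, OF g] dev_sum[of "\<lambda>_. 1"] by (simp add: sum.distrib algebra_simps)
  finally show ?thesis .
qed

lemma joint_eq_expect: "joint n \<mu> xs ws = expect n \<mu> (\<lambda>\<sigma>. if map \<sigma> xs = ws then 1 else 0)"
  unfolding joint_def expect_def by (simp add: sum.inter_filter[OF finite_cfg], intro sum.cong) auto

lemma joint_Cons_eq_wmarg:
  "joint n \<mu> (x # xs) (w # ws) = wmarg n \<mu> (\<lambda>\<sigma>. if map \<sigma> xs = ws then 1 else 0) x w"
  unfolding joint_eq_expect wmarg_def by (intro arg_cong[where f = "expect n \<mu>"] ext) auto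

lemma marg_nonneg: "0 \<le> marg n \<mu> x w"
  unfolding marg_eq_wmarg_1 using wmarg_bounds[of "\<lambda>_. 1"] by simp

lemma sum_marg_eq_1: "(\<Sum>w\<in>UNIV. marg n \<mu> x w) = 1"
  unfolding marg_eq_wmarg_1 sum_wmarg by simp

lemma tv_joint_Cons_le:
  "tv {ws. length ws = Suc j} (joint n \<mu> (x # xs)) (prod_marg n \<mu> (x # xs))
    \<le> 1/2 * (\<Sum>w\<in>UNIV. \<Sum>ws\<in>{ws. length ws = j}.
                 \<bar>joint n \<mu> (x # xs) (w # ws) - marg n \<mu> x w * joint n \<mu> xs ws\<bar>)
      + tv {ws. length ws = j} (joint n \<mu> xs) (prod_marg n \<mu> xs)"
proof -
  let ?W = "{ws :: 'o list. length ws = j}"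
  have "\<bar>joint n \<mu> (x # xs) (w # ws) - prod_marg n \<mu> (x # xs) (w # ws)\<bar>
      \<le> \<bar>joint n \<mu> (x # xs) (w # ws) - marg n \<mu> x w * joint n \<mu> xs ws\<bar>
        + marg n \<mu> x w * \<bar>joint n \<mu> xs ws - prod_marg n \<mu> xs ws\<bar>" for w ws
  proof -
    have "joint n \<mu> (x # xs) (w # ws) - prod_marg n \<mu> (x # xs) (w # ws)
        = (joint n \<mu> (x # xs) (w # ws) - marg n \<mu> x w * joint n \<mu> xs ws)
          + marg n \<mu> x w * (joint n \<mu> xs ws - prod_marg n \<mu> xs ws)"
      by (simp add: prod_marg_Cons algebra_simps)
    moreover have "\<bar>marg n \<mu> x w * (joint n \<mu> xs ws - prod_marg n \<mu> xs ws)\<bar>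
        = marg n \<mu> x w * \<bar>joint n \<mu> xs ws - prod_marg n \<mu> xs ws\<bar>"
      using marg_nonneg[of x w] by (simp add: abs_mult)
    ultimately show ?thesis
      by (metis abs_triangle_ineq)
  qed
  then have "(\<Sum>ws\<in>?W. \<Sum>w\<in>UNIV. \<bar>joint n \<mu> (x # xs) (w # ws) - prod_marg n \<mu> (x # xs) (w # ws)\<bar>)
      \<le> (\<Sum>ws\<in>?W. \<Sum>w\<in>UNIV. \<bar>joint n \<mu> (x # xs) (w # ws) - marg n \<mu> x w * joint n \<mu> xs ws\<bar>
           + marg n \<mu> x w * \<bar>joint n \<mu> xs ws - prod_marg n \<mu> xs ws\<bar>)"
    by (intro sum_mono)
  also have "\<dots> = (\<Sum>w\<in>UNIV. \<Sum>ws\<in>?W. \<bar>joint n \<mu> (x # xs) (w # ws) - marg n \<mu> x w * joint n \<mu> xs ws\<bar>)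
      + (\<Sum>ws\<in>?W. \<bar>joint n \<mu> xs ws - prod_marg n \<mu> xs ws\<bar>)"
    by (simp add: sum.distrib sum_distrib_right[symmetric] sum_marg_eq_1 sum.swap[of _ UNIV])
  finally show ?thesis
    unfolding tv_def sum_lists_Suc[where A = UNIV, simplified] by simp
qed

lemma decoupling_error_indicator_eq:
  "decoupling_error n \<mu> (\<lambda>\<sigma>. if map \<sigma> xs = ws then 1 else 0)
    = (\<Sum>x\<in>{1..n}. \<Sum>w\<in>UNIV. \<bar>joint n \<mu> (x # xs) (w # ws) - marg n \<mu> x w * joint n \<mu> xs ws\<bar>)"
  by (simp add: decoupling_error_def joint_Cons_eq_wmarg joint_eq_expect[of xs])

lemma sum_joint_Cons_dev_le:
  assumes decoupling: "\<And>g. (\<And>\<sigma>. \<sigma> \<in> cfg n \<Longrightarrow> 0 \<le> g \<sigma> \<and> g \<sigma> \<le> 1) \<Longrightarrow>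
      decoupling_error n \<mu> g \<le> \<eta> * real n"
  shows "(\<Sum>x\<in>{1..n}. \<Sum>w\<in>UNIV. \<Sum>ws\<in>{ws. length ws = j}.
            \<bar>joint n \<mu> (x # xs) (w # ws) - marg n \<mu> x w * joint n \<mu> xs ws\<bar>)
    \<le> real CARD('o) ^ j * (\<eta> * real n)"
proof -
  let ?W = "{ws :: 'o list. length ws = j}"
  have "(\<Sum>x\<in>{1..n}. \<Sum>w\<in>UNIV. \<Sum>ws\<in>?W.
            \<bar>joint n \<mu> (x # xs) (w # ws) - marg n \<mu> x w * joint n \<mu> xs ws\<bar>)
      = (\<Sum>ws\<in>?W. \<Sum>x\<in>{1..n}. \<Sum>w\<in>UNIV.
            \<bar>joint n \<mu> (x # xs) (w # ws) - marg n \<mu> x w * joint n \<mu> xs ws\<bar>)"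
    by (simp add: sum.swap[of _ ?W])
  also have "\<dots> \<le> (\<Sum>ws\<in>?W. \<eta> * real n)"
    unfolding decoupling_error_indicator_eq[symmetric] by (intro sum_mono decoupling) simp
  also have "\<dots> = real CARD('o) ^ j * (\<eta> * real n)"
    using card_lists_length_eq[of "UNIV :: 'o set" j] by simp
  finally show ?thesis .
qed

lemma sum_tv_joint_prod_marg_le:
  assumes decoupling: "\<And>g. (\<And>\<sigma>. \<sigma> \<in> cfg n \<Longrightarrow> 0 \<le> g \<sigma> \<and> g \<sigma> \<le> 1) \<Longrightarrow>
      decoupling_error n \<mu> g \<le> \<eta> * real n"
    and \<eta>: "0 \<le> \<eta>"
  shows "(\<Sum>xs\<in>{xs. set xs \<subseteq> {1..n} \<and> length xs = j}.
            tv {ws. length ws = j} (joint n \<mu> xs) (prod_marg n \<mu> xs))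
    \<le> real j * real n ^ j * real CARD('o) ^ j * \<eta> / 2"
proof (induction j)
  case 0
  have "{xs. set xs \<subseteq> {1..n} \<and> length xs = 0} = {[]}" "{ws :: 'o list. length ws = 0} = {[]}"
    by auto
  moreover have "joint n \<mu> [] [] = 1"
    by (simp add: joint_eq_expect)
  ultimately show ?case
    by (simp add: tv_def prod_marg_def)
next
  case (Suc j)
  let ?L = "{xs. set xs \<subseteq> {1..n} \<and> length xs = j}"
  let ?tv = "\<lambda>xs. tv {ws :: 'o list. length ws = j} (joint n \<mu> xs) (prod_marg n \<mu> xs)"
  let ?C = "real CARD('o)"
  let ?D = "\<lambda>x xs. \<Sum>w\<in>UNIV. \<Sum>ws\<in>{ws. length ws = j}.
    \<bar>joint n \<mu> (x # xs) (w # ws) - marg n \<mu> x w * joint n \<mu> xs ws\<bar>"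
  have "(\<Sum>xs\<in>{xs. set xs \<subseteq> {1..n} \<and> length xs = Suc j}.
            tv {ws. length ws = Suc j} (joint n \<mu> xs) (prod_marg n \<mu> xs))
      \<le> (\<Sum>xs\<in>?L. \<Sum>x\<in>{1..n}. 1/2 * ?D x xs + ?tv xs)"
    unfolding sum_lists_Suc by (intro sum_mono tv_joint_Cons_le)
  also have "\<dots> = (\<Sum>xs\<in>?L. 1/2 * (\<Sum>x\<in>{1..n}. ?D x xs) + real n * ?tv xs)"
    by (simp add: sum.distrib sum_distrib_left)
  also have "\<dots> \<le> (\<Sum>xs\<in>?L. 1/2 * (?C ^ j * (\<eta> * real n)) + real n * ?tv xs)"
    by (intro sum_mono add_right_mono mult_left_mono sum_joint_Cons_dev_le decoupling) auto
  also have "\<dots> = real n ^ j * (?C ^ j * \<eta> * real n / 2) + real n * (\<Sum>xs\<in>?L. ?tv xs)"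
    using card_lists_length_eq[of "{1..n}" j] by (simp add: sum.distrib sum_distrib_left)
  also have "\<dots> \<le> real n ^ j * (?C ^ j * \<eta> * real n / 2) + real n * (real j * real n ^ j * ?C ^ j * \<eta> / 2)"
    using Suc.IH by (intro add_left_mono mult_left_mono) auto
  also have "\<dots> = real (Suc j) * real n ^ Suc j * ?C ^ j * \<eta> / 2"
    by (simp add: algebra_simps)
  also have "\<dots> \<le> real (Suc j) * real n ^ Suc j * ?C ^ Suc j * \<eta> / 2"
    using \<eta> by (intro divide_right_mono mult_right_mono mult_left_mono) (auto simp: card_gt_0_iff Suc_le_eq)
  finally show ?case .
qed

end

theorem lemma2p8:
  fixes k :: nat and \<epsilon> :: real
  assumes "k \<ge> 2" and "\<epsilon> > 0"
  shows "\<exists>\<delta>>0. \<exists>n0. \<forall>n\<ge>n0. \<forall>(\<mu> :: (nat \<Rightarrow> 'o::finite) \<Rightarrow> real) m V.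
           is_prob n \<mu> \<longrightarrow> is_partition n m V \<longrightarrow> regular_wrt n \<delta> \<mu> m V \<longrightarrow>
           (\<Sum>i\<in>{1..m}. real (card (V i)) / real n *
              expect n \<mu> (\<lambda>\<sigma>. tv (UNIV :: 'o set) (frac \<sigma> (V i))
                 (\<lambda>\<omega>. expect n \<mu> (\<lambda>\<tau>. frac \<tau> (V i) \<omega>)))) < \<delta> \<longrightarrow>
           symmetric n \<epsilon> k \<mu>"
proof -
  define C where "C = real CARD('o)"
  define \<delta> where "\<delta> = \<epsilon> / (2 * (real k * C ^ k * (8 * C + 2)))"
  have "C \<ge> 1"
    unfolding C_def by (simp add: Suc_le_eq)
  then have "\<delta> > 0"
    unfolding \<delta>_def using assms by simp
  show ?thesis
  proof (intro exI[of _ \<delta>] conjI \<open>\<delta> > 0\<close> exI[of _ 1] allI impI)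
    fix n m V and \<mu> :: "(nat \<Rightarrow> 'o) \<Rightarrow> real"
    assume n: "n \<ge> 1" and prob: "is_prob n \<mu>" and part: "is_partition n m V"
      and reg: "regular_wrt n \<delta> \<mu> m V"
      and dispersion: "(\<Sum>i\<in>{1..m}. real (card (V i)) / real n *
              expect n \<mu> (\<lambda>\<sigma>. tv UNIV (frac \<sigma> (V i)) (\<lambda>\<omega>. expect n \<mu> (\<lambda>\<tau>. frac \<tau> (V i) \<omega>)))) < \<delta>"
    let ?\<eta> = "2 * (8 * C + 2) * \<delta>"
    have "(\<Sum>xs\<in>{xs. set xs \<subseteq> {1..n} \<and> length xs = k}.
            tv {ws. length ws = k} (joint n \<mu> xs) (prod_marg n \<mu> xs))
        \<le> real k * real n ^ k * C ^ k * ?\<eta> / 2"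
      unfolding C_def
    proof (intro sum_tv_joint_prod_marg_le[OF prob] decoupling_error_le[OF prob _ part reg])
      show "(\<Sum>i\<in>{1..m}. real (card (V i)) / real n * frac_dispersion n \<mu> (V i)) < \<delta>"
        using dispersion unfolding frac_dispersion_def mean_frac_def .
    qed (use n \<open>\<delta> > 0\<close> in auto)
    also have "\<dots> = real n ^ k * ((real k * C ^ k * (8 * C + 2)) * \<delta>)"
      by (simp add: algebra_simps)
    also have "\<dots> = real n ^ k * (\<epsilon> / 2)"
      unfolding \<delta>_def using assms \<open>C \<ge> 1\<close> by simp
    finally have "1 / real n ^ k * (\<Sum>xs\<in>{xs. set xs \<subseteq> {1..n} \<and> length xs = k}.
        tv {ws. length ws = k} (joint n \<mu> xs) (prod_marg n \<mu> xs)) \<le> \<epsilon> / 2"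
      using n by (simp add: field_simps)
    then show "symmetric n \<epsilon> k \<mu>"
      unfolding symmetric_def using \<open>\<epsilon> > 0\<close> by linarith
  qed
qed

end
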